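(* Let $P_1,P_2,N>0$. If $\sigma_1^2\ge P_1\big(\frac32+\frac{P_2}{N}\big)$ and $\sigma_2^2\ge P_2\big(\frac32+\frac{P_1}{N}\big)$, then $\mathcal R_{\mathrm{Wil}}(P_1,P_2,N,\sigma_1^2,\sigma_2^2)=\mathcal C_{\mathrm{MAC}}(P_1,P_2,N)$.
   Context: For $x\in[0,1]$, $\bar x=1-x$. The region $\mathcal R_{\mathrm{Wil}}(P_1,P_2,N,\sigma_1^2,\sigma_2^2)$ (for $\sigma_1^2,\sigma_2^2\ge0$) is the set of pairs $(R_1,R_2)$ for which there exist nonnegative $R_{1,0},R_{1,1}$ with $R_{1,0}+R_{1,1}=R_1$, nonnegative $R_{2,0},R_{2,2}$ with $R_{2,0}+R_{2,2}=R_2$, and $\delta_1,\delta_2,\rho_1,\rho_2\in[0,1]$ such that $R_{1,1}\le\frac12\log(1+\frac{\delta_1P_1}{N})$; $R_{1,0}\le\frac12\log\big(1+\frac{\bar\delta_1P_1(1-\rho_1^2)}{\delta_1P_1+N+\sigma_2^2}\big)$; $R_{2,0}\le\frac12\log\big(1+\frac{\bar\delta_2P_2(1-\rho_2^2)}{\delta_2P_2+N+\sigma_1^2}\big)$; $R_{2,2}\le\frac12\log(1+\frac{\delta_2P_2}{N})$; $R_{1,1}+R_{2,2}\le\frac12\log(1+\frac{\delta_1P_1+\delta_2P_2}{N})$; $R_1+R_2\le\frac12\log\big(1+\frac{P_1+P_2+2\sqrt{\bar\delta_1\bar\delta_2P_1P_2}\rho_1\rho_2}{N}\big)$. The no-feedback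 capacity region $\mathcal C_{\mathrm{MAC}}(P_1,P_2,N)$ is the set of nonnegative $(R_1,R_2)$ with $R_1\le\frac12\log(1+\frac{P_1}{N})$, $R_2\le\frac12\log(1+\frac{P_2}{N})$, $R_1+R_2\le\frac12\log(1+\frac{P_1+P_2}{N})$. *)

theory Defs
  imports Complex_Main
begin

text \<open>Logarithms are taken base 2 (the base is immaterial for the set equality).
 The parameters s1, s2 stand for the variances sigma_1^2, sigma_2^2.\<close>

definition R_Wil :: "real \<Rightarrow> real \<Rightarrow> real \<Rightarrow> real \<Rightarrow> real \<Rightarrow> (real \<times> real) set" where
  "R_Wil P1 P2 N s1 s2 = {(R1, R2). \<exists>R10 R11 R20 R22 d1 d2 r1 r2.
     R10 \<ge> 0 \<and> R11 \<ge> 0 \<and> R10 + R11 = R1 \<and>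
     R20 \<ge> 0 \<and> R22 \<ge> 0 \<and> R20 + R22 = R2 \<and>
     d1 \<in> {0..1} \<and> d2 \<in> {0..1} \<and> r1 \<in> {0..1} \<and> r2 \<in> {0..1} \<and>
     R11 \<le> 1/2 * log 2 (1 + d1 * P1 / N) \<and>
     R10 \<le> 1/2 * log 2 (1 + (1 - d1) * P1 * (1 - r1^2) / (d1 * P1 + N + s2)) \<and>
     R20 \<le> 1/2 * log 2 (1 + (1 - d2) * P2 * (1 - r2^2) / (d2 * P2 + N + s1)) \<and>
     R22 \<le> 1/2 * log 2 (1 + d2 * P2 / N) \<and>
     R11 + R22 \<le> 1/2 * log 2 (1 + (d1 * P1 + d2 * P2) / N) \<and>
     R1 + R2 \<le> 1/2 * log 2 (1 + (P1 + P2 + 2 * sqrt ((1 - d1) * (1 - d2) * P1 * P2) * r1 * r2) / N)}"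

definition C_MAC :: "real \<Rightarrow> real \<Rightarrow> real \<Rightarrow> (real \<times> real) set" where
  "C_MAC P1 P2 N = {(R1, R2). R1 \<ge> 0 \<and> R2 \<ge> 0 \<and>
     R1 \<le> 1/2 * log 2 (1 + P1 / N) \<and> R2 \<le> 1/2 * log 2 (1 + P2 / N) \<and>
     R1 + R2 \<le> 1/2 * log 2 (1 + (P1 + P2) / N)}"

end

theory Submission
  imports Defs
begin

text \<open>
  The inclusion C_MAC \<subseteq> R_Wil holds for all parameters: choosing
  \<delta>1 = \<delta>2 = 1 and \<rho>1 = \<rho>2 = 0 (no cooperative part, all rate on the private
  messages R11, R22) turns the constraints of R_Wil into those of C_MAC.
  For R_Wil \<subseteq> C_MAC the hypotheses on the variances are only used through
  their consequence s1 \<ge> P1 and s2 \<ge> P2.  Writing every rate bound as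
  1/2 log of a gain factor, it suffices to bound products of gain factors:
  (1 + \<delta>P/N)(1 + u/(\<delta>P+N+s)) \<le> 1 + P/N bounds each user's rate, and
  a three-factor product inequality (reduced to a polynomial inequality)
  bounds R1 + R2 through R11 + R22, R10 and R20.
\<close>

lemma half_log_sum_le:
  fixes x y z :: real
  assumes "x > 0" "y > 0" "x * y \<le> z"
  shows "1/2 * log 2 x + 1/2 * log 2 y \<le> 1/2 * log 2 z"
proof -
  have "x * y > 0" using assms by simp
  have "log 2 x + log 2 y = log 2 (x * y)" using assms by (simp add: log_mult_pos)
  also have "\<dots> \<le> log 2 z" using \<open>x * y > 0\<close> assms(3) by simp
  finally show ?thesis by simp
qed

lemma single_user_gain:
  fixes d P N u s :: real
  assumes "0 \<le> d" "d \<le> 1" "P > 0" "N > 0" "s \<ge> 0" "0 \<le> u" "u \<le> (1 - d) * P"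
  shows "(1 + d * P / N) * (1 + u / (d * P + N + s)) \<le> 1 + P / N"
proof -
  have dP: "d * P \<ge> 0" "d * P + N > 0" using assms by (simp_all add: add_nonneg_pos)
  have "u / (d * P + N + s) \<le> (1 - d) * P / (d * P + N)"
    using assms dP by (intro frac_le) auto
  then have "(1 + d * P / N) * (1 + u / (d * P + N + s))
      \<le> (1 + d * P / N) * (1 + (1 - d) * P / (d * P + N))"
    using assms dP by (intro mult_left_mono) auto
  also have "\<dots> = ((d * P + N) / N) * ((N + P) / (d * P + N))"
    using assms(4) dP by (simp add: field_simps)
  also have "\<dots> = (N + P) / N"
    using dP by simp
  also have "\<dots> = 1 + P / N"
    using assms(4) by (simp add: field_simps)
  finally show ?thesis .
qed

text \<open>Polynomial core of the sum-rate bound: with a, c the private powers,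
  e1, e2 the residual powers and s1 \<ge> a + e1, s2 \<ge> c + e2.\<close>
lemma cooperative_polynomial_ineq:
  fixes a c e1 e2 N s1 s2 :: real
  assumes "a \<ge> 0" "c \<ge> 0" "e1 \<ge> 0" "e2 \<ge> 0" "N > 0" "s1 \<ge> a + e1" "s2 \<ge> c + e2"
  shows "(N + a + c) * (N + a + s2 + e1) * (N + c + s1 + e2)
           \<le> (N + a + c + e1 + e2) * (N + a + s2) * (N + c + s1)"
proof -
  have "e1 * (N + c + s1) * e2 \<le> e1 * (N + c + s1) * (s2 - c)"
    using assms by (intro mult_left_mono) auto
  moreover have "e2 * (N + a + s2) * e1 \<le> e2 * (N + a + s2) * (s1 - a)"
    using assms by (intro mult_left_mono) auto
  moreover have "e1 * e2 * (N + a + c) \<le> e1 * e2 * ((N + c + s1) + (N + a + s2))"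
    using assms by (intro mult_left_mono) auto
  ultimately show ?thesis by (simp add: algebra_simps)
qed

lemma cooperative_gain:
  fixes a c e1 e2 u1 u2 N s1 s2 :: real
  assumes "a \<ge> 0" "c \<ge> 0" "e1 \<ge> 0" "e2 \<ge> 0" "N > 0" "s1 \<ge> a + e1" "s2 \<ge> c + e2"
    and "0 \<le> u1" "u1 \<le> e1" "0 \<le> u2" "u2 \<le> e2"
  shows "(1 + (a + c) / N) * (1 + u1 / (a + N + s2)) * (1 + u2 / (c + N + s1))
           \<le> 1 + (a + e1 + c + e2) / N"
proof -
  define X where "X = a + N + s2"
  define Y where "Y = c + N + s1"
  have pos: "X > 0" "Y > 0" "1 + (a + c) / N \<ge> 0" "1 + e1 / X \<ge> 0"
    "1 + u1 / X \<ge> 0" "1 + u2 / Y \<ge> 0"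
    using assms by (auto simp: X_def Y_def)
  have "1 + u1 / X \<le> 1 + e1 / X" "1 + u2 / Y \<le> 1 + e2 / Y"
    using pos assms by (simp_all add: divide_right_mono)
  then have "(1 + (a + c) / N) * (1 + u1 / X) * (1 + u2 / Y)
      \<le> (1 + (a + c) / N) * (1 + e1 / X) * (1 + e2 / Y)"
    using pos by (intro mult_mono) (auto intro: mult_left_mono)
  also have "\<dots> = ((N + a + c) * (X + e1) * (Y + e2)) / (N * X * Y)"
    using pos assms(5) by (simp add: field_simps)
  also have "\<dots> \<le> ((N + a + c + e1 + e2) * X * Y) / (N * X * Y)"
  proof (rule divide_right_mono)
    show "(N + a + c) * (X + e1) * (Y + e2) \<le> (N + a + c + e1 + e2) * X * Y"
      using cooperative_polynomial_ineq[OF assms(1-7)] by (simp add: X_def Y_def algebra_simps)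
    show "0 \<le> N * X * Y" using pos assms(5) by simp
  qed
  also have "\<dots> = 1 + (a + e1 + c + e2) / N"
    using pos assms(5) by (simp add: field_simps)
  finally show ?thesis unfolding X_def Y_def .
qed

lemma residual_power_bounds:
  fixes d r P :: real
  assumes "0 \<le> d" "d \<le> 1" "0 \<le> r" "r \<le> 1" "P \<ge> 0"
  shows "0 \<le> (1 - d) * P * (1 - r^2)" "(1 - d) * P * (1 - r^2) \<le> (1 - d) * P"
proof -
  have "0 \<le> 1 - r^2" "1 - r^2 \<le> 1" using assms by (auto simp: power_le_one)
  moreover have "0 \<le> (1 - d) * P" using assms by simp
  ultimately show "0 \<le> (1 - d) * P * (1 - r^2)" "(1 - d) * P * (1 - r^2) \<le> (1 - d) * P"
    using mult_left_mono[of "1 - r^2" 1 "(1 - d) * P"] by simp_all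
qed

lemma single_user_rate_bound:
  fixes d P N u s Rp Rc :: real
  assumes "0 \<le> d" "d \<le> 1" "P > 0" "N > 0" "s \<ge> 0" "0 \<le> u" "u \<le> (1 - d) * P"
    and "Rp \<le> 1/2 * log 2 (1 + d * P / N)"
    and "Rc \<le> 1/2 * log 2 (1 + u / (d * P + N + s))"
  shows "Rc + Rp \<le> 1/2 * log 2 (1 + P / N)"
proof -
  have "1 + d * P / N > 0" "1 + u / (d * P + N + s) > 0"
    using assms by (auto intro: add_pos_nonneg)
  from half_log_sum_le[OF this single_user_gain[OF assms(1-7)]] assms(8,9)
  show ?thesis by linarith
qed

lemma sum_rate_bound:
  fixes d1 d2 P1 P2 N u1 u2 s1 s2 R10 R11 R20 R22 :: real
  assumes "0 \<le> d1" "d1 \<le> 1" "0 \<le> d2" "d2 \<le> 1" "P1 > 0" "P2 > 0" "N > 0"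
    and "s1 \<ge> P1" "s2 \<ge> P2"
    and "0 \<le> u1" "u1 \<le> (1 - d1) * P1" "0 \<le> u2" "u2 \<le> (1 - d2) * P2"
    and "R11 + R22 \<le> 1/2 * log 2 (1 + (d1 * P1 + d2 * P2) / N)"
    and "R10 \<le> 1/2 * log 2 (1 + u1 / (d1 * P1 + N + s2))"
    and "R20 \<le> 1/2 * log 2 (1 + u2 / (d2 * P2 + N + s1))"
  shows "(R10 + R11) + (R20 + R22) \<le> 1/2 * log 2 (1 + (P1 + P2) / N)"
proof -
  let ?G = "1 + (d1 * P1 + d2 * P2) / N"
  let ?G1 = "1 + u1 / (d1 * P1 + N + s2)"
  let ?G2 = "1 + u2 / (d2 * P2 + N + s1)"
  have powers: "d1 * P1 \<ge> 0" "d2 * P2 \<ge> 0" "(1 - d1) * P1 \<ge> 0" "(1 - d2) * P2 \<ge> 0"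
    using assms by simp_all
  then have pos: "?G > 0" "?G1 > 0" "?G2 > 0"
    using assms by (auto intro!: add_pos_nonneg)
  have "?G * ?G1 * ?G2 \<le> 1 + (d1 * P1 + (1 - d1) * P1 + d2 * P2 + (1 - d2) * P2) / N"
    using powers assms by (intro cooperative_gain) (auto simp: algebra_simps)
  also have "\<dots> = 1 + (P1 + P2) / N" by (simp add: algebra_simps)
  finally have gain: "?G * ?G1 * ?G2 \<le> 1 + (P1 + P2) / N" .
  have "log 2 (?G * ?G1) = log 2 ?G + log 2 ?G1"
    using pos by (intro log_mult_pos) simp_all
  moreover have "1/2 * log 2 (?G * ?G1) + 1/2 * log 2 ?G2 \<le> 1/2 * log 2 (1 + (P1 + P2) / N)"
    using pos gain by (intro half_log_sum_le) simp_all
  ultimately show ?thesis using assms(14-16) by linarith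
qed

lemma C_MAC_subset_R_Wil: "C_MAC P1 P2 N \<subseteq> R_Wil P1 P2 N s1 s2"
proof
  fix x assume "x \<in> C_MAC P1 P2 N"
  then obtain R1 R2 where x: "x = (R1, R2)" and bounds: "R1 \<ge> 0" "R2 \<ge> 0"
    "R1 \<le> 1/2 * log 2 (1 + P1 / N)" "R2 \<le> 1/2 * log 2 (1 + P2 / N)"
    "R1 + R2 \<le> 1/2 * log 2 (1 + (P1 + P2) / N)"
    unfolding C_MAC_def by auto
  show "x \<in> R_Wil P1 P2 N s1 s2"
    unfolding x R_Wil_def mem_Collect_eq case_prod_conv
    by (rule exI[of _ 0], rule exI[of _ R1], rule exI[of _ 0], rule exI[of _ R2],
        rule exI[of _ 1], rule exI[of _ 1], rule exI[of _ 0], rule exI[of _ 0])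
       (use bounds in simp)
qed

lemma R_Wil_subset_C_MAC:
  fixes P1 P2 N s1 s2 :: real
  assumes "P1 > 0" "P2 > 0" "N > 0" "s1 \<ge> P1" "s2 \<ge> P2"
  shows "R_Wil P1 P2 N s1 s2 \<subseteq> C_MAC P1 P2 N"
proof
  fix x assume "x \<in> R_Wil P1 P2 N s1 s2"
  then obtain R10 R11 R20 R22 d1 d2 r1 r2 where x: "x = (R10 + R11, R20 + R22)"
    and nonneg: "R10 \<ge> 0" "R11 \<ge> 0" "R20 \<ge> 0" "R22 \<ge> 0"
    and params: "d1 \<in> {0..1}" "d2 \<in> {0..1}" "r1 \<in> {0..1}" "r2 \<in> {0..1}"
    and R11: "R11 \<le> 1/2 * log 2 (1 + d1 * P1 / N)"
    and R10: "R10 \<le> 1/2 * log 2 (1 + (1 - d1) * P1 * (1 - r1^2) / (d1 * P1 + N + s2))"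
    and R20: "R20 \<le> 1/2 * log 2 (1 + (1 - d2) * P2 * (1 - r2^2) / (d2 * P2 + N + s1))"
    and R22: "R22 \<le> 1/2 * log 2 (1 + d2 * P2 / N)"
    and R11_R22: "R11 + R22 \<le> 1/2 * log 2 (1 + (d1 * P1 + d2 * P2) / N)"
    unfolding R_Wil_def by blast
  have u1: "0 \<le> (1 - d1) * P1 * (1 - r1^2)" "(1 - d1) * P1 * (1 - r1^2) \<le> (1 - d1) * P1"
    using params assms by (intro residual_power_bounds; simp)+
  have u2: "0 \<le> (1 - d2) * P2 * (1 - r2^2)" "(1 - d2) * P2 * (1 - r2^2) \<le> (1 - d2) * P2"
    using params assms by (intro residual_power_bounds; simp)+
  have "R10 + R11 \<le> 1/2 * log 2 (1 + P1 / N)"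
    using params assms u1 R10 R11 by (intro single_user_rate_bound) auto
  moreover have "R20 + R22 \<le> 1/2 * log 2 (1 + P2 / N)"
    using params assms u2 R20 R22 by (intro single_user_rate_bound) auto
  moreover have "(R10 + R11) + (R20 + R22) \<le> 1/2 * log 2 (1 + (P1 + P2) / N)"
    using params assms u1 u2 R10 R20 R11_R22 by (intro sum_rate_bound) auto
  ultimately show "x \<in> C_MAC P1 P2 N" using x nonneg unfolding C_MAC_def by simp
qed

theorem mainTheorem14:
  fixes P1 P2 N s1 s2 :: real
  assumes "P1 > 0" and "P2 > 0" and "N > 0"
    and "s1 \<ge> P1 * (3/2 + P2 / N)"
    and "s2 \<ge> P2 * (3/2 + P1 / N)"
  shows "R_Wil P1 P2 N s1 s2 = C_MAC P1 P2 N"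
proof
  have "P1 \<le> P1 * (3/2 + P2 / N)" "P2 \<le> P2 * (3/2 + P1 / N)"
    using assms(1-3) by (simp_all add: field_simps)
  then have "s1 \<ge> P1" "s2 \<ge> P2" using assms(4,5) by linarith+
  with assms(1-3) show "R_Wil P1 P2 N s1 s2 \<subseteq> C_MAC P1 P2 N"
    by (rule R_Wil_subset_C_MAC)
  show "C_MAC P1 P2 N \<subseteq> R_Wil P1 P2 N s1 s2" by (rule C_MAC_subset_R_Wil)
qed

end
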